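(* For every positive integer $L$, every $Y\ge1$ and every $\varepsilon>0$, \[ S(L,Y):=\sum_{\substack{\ell\mid L^\infty\\ \ell\le Y}}\frac{\ell}{\nu(\ell)^2}\Big(\sum_{d\mid\ell}c_\ell(d)d^{1/2}\Big)^2\ll_\varepsilon Y^{\varepsilon}\tau(L), \] where $\tau$ is the divisor function.
   Context: $\nu$ is the completely multiplicative function with $\nu(p)=p+1$ for primes $p$. $\ell\mid L^\infty$ means every prime factor of $\ell$ divides $L$. The Chebyshev coefficients $c_{j,n}$ are defined by $x^n=\sum_{j=0}^n c_{j,n}U_j(x/2)$, with $U_j$ the Chebyshev polynomials of the second kind; for $d\mid\ell$, $c_\ell(d)=\prod_{p\mid\ell}c_{j_p,n_p}$ where $p^{j_p}\|d$, $p^{n_p}\|\ell$. *)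

theory Defs
  imports "HOL-Analysis.Analysis" "HOL-Computational_Algebra.Primes"
begin

fun chebU :: "nat \<Rightarrow> real \<Rightarrow> real" where
  "chebU 0 x = 1"
| "chebU (Suc 0) x = 2 * x"
| "chebU (Suc (Suc n)) x = 2 * x * chebU (Suc n) x - chebU n x"

definition cheb_coeff :: "nat \<Rightarrow> nat \<Rightarrow> real" where
  "cheb_coeff j n = (THE c :: nat \<Rightarrow> real. (\<forall>i>n. c i = 0) \<and>
       (\<forall>x::real. x ^ n = (\<Sum>i\<le>n. c i * chebU i (x / 2)))) j"

definition nu :: "nat \<Rightarrow> nat" where
  "nu l = (\<Prod>p\<in>prime_factors l. (p + 1) ^ multiplicity p l)"

definition c_ell :: "nat \<Rightarrow> nat \<Rightarrow> real" where
  "c_ell l d = (\<Prod>p\<in>prime_factors l. cheb_coeff (multiplicity p d) (multiplicity p l))"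

definition S_sum :: "nat \<Rightarrow> real \<Rightarrow> real" where
  "S_sum L Y = (\<Sum>l\<in>{l::nat. 0 < l \<and> real l \<le> Y \<and> prime_factors l \<subseteq> prime_factors L}.
      real l / (real (nu l))^2 * (\<Sum>d | d dvd l. c_ell l d * sqrt (real d))^2)"

end

theory Submission
  imports Defs "HOL-Computational_Algebra.Polynomial" "HOL-Number_Theory.Totient"
begin

text \<open>
  If \<open>\<ell>\<close> has exponent \<open>n\<close> at \<open>p\<close>, the inner sum factors over the primes \<open>p | \<ell>\<close> into
  \<open>\<Sum>\<^sub>j c(j,n) p\<^sup>j\<^sup>/\<^sup>2\<close>. The coefficients \<open>c(j,n)\<close> are nonnegative and satisfy the recursion
  coming from \<open>x U\<^sub>j(x/2) = U\<^sub>j\<^sub>+\<^sub>1(x/2) + U\<^sub>j\<^sub>-\<^sub>1(x/2)\<close>, which gives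
  \<open>\<Sum>\<^sub>j c(j,n) y\<^sup>j \<le> (y + 1/y)\<^sup>n\<close>; at \<open>y = \<surd>p\<close> this is \<open>((p + 1)/\<surd>p)\<^sup>n\<close>. So every term of
  \<open>S(L,Y)\<close> is at most \<open>1\<close>, and \<open>S(L,Y)\<close> is at most the number of \<open>\<ell> \<le> Y\<close> with
  \<open>\<ell> | L\<^sup>\<infinity>\<close>. By Rankin's trick this number is at most \<open>Y\<^sup>\<epsilon> \<Prod>\<^sub>p\<^sub>|\<^sub>L (1 - p\<^sup>-\<^sup>\<epsilon>)\<^sup>-\<^sup>1\<close>;
  the Euler factor is at most \<open>2\<close> as soon as \<open>p \<ge> 2\<^sup>1\<^sup>/\<^sup>\<epsilon>\<close>, and \<open>2\<^sup>\<omega>\<^sup>(\<^sup>L\<^sup>) \<le> \<tau>(L)\<close>.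
\<close>

section \<open>Chebyshev coefficients\<close>

fun cheb_coeff_rec :: "nat \<Rightarrow> nat \<Rightarrow> real" where
  "cheb_coeff_rec j 0 = (if j = 0 then 1 else 0)"
| "cheb_coeff_rec j (Suc n) =
     (if j = 0 then cheb_coeff_rec 1 n else cheb_coeff_rec (j - 1) n + cheb_coeff_rec (j + 1) n)"

lemma cheb_coeff_rec_eq_0: "n < j \<Longrightarrow> cheb_coeff_rec j n = 0"
  by (induction n arbitrary: j) auto

lemma cheb_coeff_rec_nonneg: "cheb_coeff_rec j n \<ge> 0"
  by (induction n arbitrary: j) auto

lemma sum_cheb_coeff_rec_Suc:
  fixes V :: "nat \<Rightarrow> real"
  shows "(\<Sum>j\<le>Suc n. cheb_coeff_rec j (Suc n) * V j) =
         (\<Sum>j\<le>n. cheb_coeff_rec j n * (V (Suc j) + (if j = 0 then 0 else V (j - 1))))"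
proof -
  have "(\<Sum>j\<le>Suc n. cheb_coeff_rec j (Suc n) * V j) =
     (\<Sum>j\<le>Suc n. (if j = 0 then 0 else cheb_coeff_rec (j - 1) n) * V j) +
     (\<Sum>j\<le>Suc n. cheb_coeff_rec (Suc j) n * V j)"
    unfolding sum.distrib[symmetric] by (rule sum.cong) (auto simp: algebra_simps)
  also have "(\<Sum>j\<le>Suc n. (if j = 0 then 0 else cheb_coeff_rec (j - 1) n) * V j) =
      (\<Sum>j\<le>n. cheb_coeff_rec j n * V (Suc j))"
    by (subst sum.atMost_Suc_shift) simp
  also have "(\<Sum>j\<le>Suc n. cheb_coeff_rec (Suc j) n * V j) =
      (\<Sum>j\<le>Suc n. cheb_coeff_rec j n * (if j = 0 then 0 else V (j - 1)))"
    by (subst (2) sum.atMost_Suc_shift) (simp add: cheb_coeff_rec_eq_0)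
  also have "\<dots> = (\<Sum>j\<le>n. cheb_coeff_rec j n * (if j = 0 then 0 else V (j - 1)))"
    by (simp add: cheb_coeff_rec_eq_0)
  finally show ?thesis
    by (simp add: sum.distrib[symmetric] algebra_simps)
qed

lemma power_eq_sum_cheb_coeff_rec: "x ^ n = (\<Sum>j\<le>n. cheb_coeff_rec j n * chebU j (x / 2))"
proof (induction n)
  case (Suc n)
  have U: "x * chebU j (x / 2) = chebU (Suc j) (x / 2) + (if j = 0 then 0 else chebU (j - 1) (x / 2))"
    for j by (cases j) auto
  have "x ^ Suc n = (\<Sum>j\<le>n. cheb_coeff_rec j n * (x * chebU j (x / 2)))"
    using Suc by (simp add: sum_distrib_left algebra_simps)
  also have "\<dots> = (\<Sum>j\<le>Suc n. cheb_coeff_rec j (Suc n) * chebU j (x / 2))"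
    by (subst sum_cheb_coeff_rec_Suc) (simp add: U)
  finally show ?case .
qed simp

fun chebU_poly :: "nat \<Rightarrow> real poly" where
  "chebU_poly 0 = 1"
| "chebU_poly (Suc 0) = [:0, 1:]"
| "chebU_poly (Suc (Suc n)) = pCons 0 (chebU_poly (Suc n)) - chebU_poly n"

lemma poly_chebU_poly: "poly (chebU_poly j) x = chebU j (x / 2)"
  by (induction j rule: chebU_poly.induct) auto

lemma chebU_poly_monic: "degree (chebU_poly j) \<le> j \<and> coeff (chebU_poly j) j = 1"
proof (induction j rule: chebU_poly.induct)
  case (3 n)
  then show ?case
    by (auto intro!: degree_diff_le simp: coeff_eq_0 degree_pCons_le le_SucI)
qed auto

lemma sum_chebU_eq_0_imp_coeffs_eq_0:
  assumes "\<And>x::real. (\<Sum>j\<le>n. e j * chebU j (x / 2)) = 0"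
  shows "\<forall>j\<le>n. e j = 0"
  using assms
proof (induction n)
  case (Suc n)
  define Q where "Q = (\<Sum>j\<le>Suc n. smult (e j) (chebU_poly j))"
  have "poly Q x = 0" for x
    using Suc.prems by (simp add: Q_def poly_sum poly_chebU_poly)
  hence "Q = 0"
    using poly_all_0_iff_0 by blast
  have "coeff (chebU_poly j) (Suc n) = 0" if "j \<le> n" for j
    using chebU_poly_monic[of j] that by (intro coeff_eq_0) auto
  hence "coeff Q (Suc n) = e (Suc n)"
    using chebU_poly_monic[of "Suc n"] by (simp add: Q_def coeff_sum)
  with \<open>Q = 0\<close> have "e (Suc n) = 0"
    by simp
  with Suc show ?case
    by (auto simp: le_Suc_eq)
qed simp

lemma cheb_coeff_eq_rec: "cheb_coeff j n = cheb_coeff_rec j n"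
proof -
  have "(THE c :: nat \<Rightarrow> real. (\<forall>i>n. c i = 0) \<and>
       (\<forall>x::real. x ^ n = (\<Sum>i\<le>n. c i * chebU i (x / 2)))) = (\<lambda>i. cheb_coeff_rec i n)"
  proof (rule the_equality)
    fix c :: "nat \<Rightarrow> real"
    assume c: "(\<forall>i>n. c i = 0) \<and> (\<forall>x::real. x ^ n = (\<Sum>i\<le>n. c i * chebU i (x / 2)))"
    have "(\<Sum>i\<le>n. (c i - cheb_coeff_rec i n) * chebU i (x / 2)) = 0" for x :: real
      using c power_eq_sum_cheb_coeff_rec[of x n] by (simp add: sum_subtractf left_diff_distrib)
    from sum_chebU_eq_0_imp_coeffs_eq_0[OF this] c cheb_coeff_rec_eq_0 show "c = (\<lambda>i. cheb_coeff_rec i n)"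
      by (intro ext) (metis eq_iff_diff_eq_0 not_le)
  qed (use cheb_coeff_rec_eq_0 power_eq_sum_cheb_coeff_rec in auto)
  thus ?thesis
    unfolding cheb_coeff_def by simp
qed

lemma sum_cheb_coeff_power_le:
  fixes y :: real
  assumes "y > 0"
  shows "0 \<le> (\<Sum>j\<le>n. cheb_coeff j n * y ^ j) \<and> (\<Sum>j\<le>n. cheb_coeff j n * y ^ j) \<le> (y + 1/y) ^ n"
  unfolding cheb_coeff_eq_rec
proof (induction n)
  case (Suc n)
  let ?A = "\<lambda>n. \<Sum>j\<le>n. cheb_coeff_rec j n * y ^ j"
  have "?A (Suc n) = (\<Sum>j\<le>n. cheb_coeff_rec j n * (y ^ Suc j + (if j = 0 then 0 else y ^ (j - 1))))"
    by (rule sum_cheb_coeff_rec_Suc)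
  also have "\<dots> \<le> (\<Sum>j\<le>n. cheb_coeff_rec j n * ((y + 1/y) * y ^ j))"
  proof (intro sum_mono mult_left_mono cheb_coeff_rec_nonneg)
    fix j
    have "(if j = 0 then 0 else y ^ (j - 1)) \<le> y ^ j / y"
      using assms by (cases j) auto
    thus "y ^ Suc j + (if j = 0 then 0 else y ^ (j - 1)) \<le> (y + 1/y) * y ^ j"
      by (simp add: algebra_simps)
  qed
  also have "\<dots> = (y + 1/y) * ?A n"
    by (simp add: sum_distrib_left algebra_simps)
  also have "\<dots> \<le> (y + 1/y) ^ Suc n"
    using Suc assms by (simp add: mult_left_mono)
  finally have "?A (Suc n) \<le> (y + 1/y) ^ Suc n" .
  moreover have "0 \<le> ?A (Suc n)"
    using assms by (intro sum_nonneg mult_nonneg_nonneg cheb_coeff_rec_nonneg) auto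
  ultimately show ?case
    by blast
qed simp

section \<open>Sums over divisors\<close>

lemma prod_prime_factors_multiplicity_dvd:
  fixes d l :: nat
  assumes "l > 0" "d dvd l"
  shows "(\<Prod>p\<in>prime_factors l. p ^ multiplicity p d) = d"
proof -
  from assms have "d > 0" "prime_factors d \<subseteq> prime_factors l"
    by (auto intro: Nat.gr0I dvd_prime_factors[THEN subsetD])
  hence "(\<Prod>p\<in>prime_factors l. p ^ multiplicity p d) = (\<Prod>p\<in>prime_factors d. p ^ multiplicity p d)"
    using assms by (intro prod.mono_neutral_right) (auto simp: in_prime_factors_iff not_dvd_imp_multiplicity_0)
  also have "\<dots> = d"
    using prod_prime_factors[of d] \<open>d > 0\<close> by simp
  finally show ?thesis .
qed

lemma power_powr_swap: "(x::real) > 0 \<Longrightarrow> (x ^ n) powr a = (x powr a) ^ n"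
  by (simp add: powr_power powr_realpow[symmetric] powr_powr mult.commute)

lemma powr_eq_prod_prime_factors_dvd:
  fixes d l :: nat
  assumes "l > 0" "d dvd l"
  shows "real d powr a = (\<Prod>p\<in>prime_factors l. (real p powr a) ^ multiplicity p d)"
proof -
  have "real d = real (\<Prod>p\<in>prime_factors l. p ^ multiplicity p d)"
    using prod_prime_factors_multiplicity_dvd[OF assms] by simp
  hence "real d powr a = (\<Prod>p\<in>prime_factors l. (real p ^ multiplicity p d) powr a)"
    by (simp add: prod_powr_distrib)
  also have "\<dots> = (\<Prod>p\<in>prime_factors l. (real p powr a) ^ multiplicity p d)"
    by (intro prod.cong refl power_powr_swap) (simp add: prime_gt_0_nat in_prime_factors_imp_prime)
  finally show ?thesis .
qed

lemma bij_betw_exponents_divisors: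
  fixes l :: nat
  assumes "l > 0"
  shows "bij_betw (\<lambda>f. \<Prod>p\<in>prime_factors l. p ^ f p)
           (PiE (prime_factors l) (\<lambda>p. {..multiplicity p l})) {d. d dvd l}"
proof (rule bij_betw_byWitness[where f' = "\<lambda>d. restrict (\<lambda>p. multiplicity p d) (prime_factors l)"])
  let ?P = "prime_factors l"
  show "\<forall>f\<in>PiE ?P (\<lambda>p. {..multiplicity p l}).
          restrict (\<lambda>p. multiplicity p (\<Prod>p\<in>?P. p ^ f p)) ?P = f"
  proof (intro ballI ext)
    fix f p assume "f \<in> PiE ?P (\<lambda>p. {..multiplicity p l})"
    thus "restrict (\<lambda>p. multiplicity p (\<Prod>p\<in>?P. p ^ f p)) ?P p = f p"
      by (cases "p \<in> ?P")
        (simp_all add: multiplicity_prod_prime_powers in_prime_factors_imp_prime PiE_def extensional_def)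
  qed
  show "\<forall>d\<in>{d. d dvd l}. (\<Prod>p\<in>?P. p ^ restrict (\<lambda>p. multiplicity p d) ?P p) = d"
    using prod_prime_factors_multiplicity_dvd[OF assms] by simp
  show "(\<lambda>f. \<Prod>p\<in>?P. p ^ f p) ` PiE ?P (\<lambda>p. {..multiplicity p l}) \<subseteq> {d. d dvd l}"
  proof clarify
    fix f assume "f \<in> PiE ?P (\<lambda>p. {..multiplicity p l})"
    hence "(\<Prod>p\<in>?P. p ^ f p) dvd (\<Prod>p\<in>?P. p ^ multiplicity p l)"
      by (intro prod_dvd_prod le_imp_power_dvd) auto
    thus "(\<Prod>p\<in>?P. p ^ f p) dvd l"
      using prod_prime_factors[of l] assms by simp
  qed
  show "(\<lambda>d. restrict (\<lambda>p. multiplicity p d) ?P) ` {d. d dvd l} \<subseteq> PiE ?P (\<lambda>p. {..multiplicity p l})"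
    using assms by (auto intro!: dvd_imp_multiplicity_le)
qed

lemma sum_divisors_prod_eq_prod_sum:
  fixes l :: nat and g :: "nat \<Rightarrow> nat \<Rightarrow> 'a :: comm_semiring_1"
  assumes "l > 0"
  shows "(\<Sum>d | d dvd l. \<Prod>p\<in>prime_factors l. g p (multiplicity p d)) =
         (\<Prod>p\<in>prime_factors l. \<Sum>j\<le>multiplicity p l. g p j)"
proof -
  let ?P = "prime_factors l" and ?E = "PiE (prime_factors l) (\<lambda>p. {..multiplicity p l})"
  have "(\<Sum>d | d dvd l. \<Prod>p\<in>?P. g p (multiplicity p d)) =
        (\<Sum>f\<in>?E. \<Prod>p\<in>?P. g p (multiplicity p (\<Prod>q\<in>?P. q ^ f q)))"
    by (rule sum.reindex_bij_betw[OF bij_betw_exponents_divisors[OF assms], symmetric])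
  also have "\<dots> = (\<Sum>f\<in>?E. \<Prod>p\<in>?P. g p (f p))"
    by (intro sum.cong prod.cong refl) (subst multiplicity_prod_prime_powers; auto)
  also have "\<dots> = (\<Prod>p\<in>?P. \<Sum>j\<le>multiplicity p l. g p j)"
    by (rule prod_sum_PiE[symmetric]) auto
  finally show ?thesis .
qed

lemma card_divisors:
  fixes L :: nat
  assumes "L > 0"
  shows "card {d. d dvd L} = (\<Prod>p\<in>prime_factors L. Suc (multiplicity p L))"
  using sum_divisors_prod_eq_prod_sum[OF assms, where g = "\<lambda>_ _. 1 :: nat"] by simp

lemma two_power_card_prime_factors_le_card_divisors:
  fixes L :: nat
  assumes "L > 0"
  shows "2 ^ card (prime_factors L) \<le> card {d. d dvd L}"
proof -
  have "2 ^ card (prime_factors L) = (\<Prod>p\<in>prime_factors L. 2::nat)"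
    by simp
  also have "\<dots> \<le> (\<Prod>p\<in>prime_factors L. Suc (multiplicity p L))"
    using assms by (intro prod_mono) (auto simp: prime_factors_multiplicity Suc_le_eq)
  finally show ?thesis
    using card_divisors[OF assms] by simp
qed

section \<open>Each term of the sum is at most one\<close>

lemma c_ell_mult_sqrt_eq_prod:
  fixes l d :: nat
  assumes "l > 0" "d dvd l"
  shows "c_ell l d * sqrt (real d) =
         (\<Prod>p\<in>prime_factors l. cheb_coeff (multiplicity p d) (multiplicity p l) * sqrt (real p) ^ multiplicity p d)"
proof -
  have "sqrt (real d) = (\<Prod>p\<in>prime_factors l. sqrt (real p) ^ multiplicity p d)"
    using powr_eq_prod_prime_factors_dvd[OF assms, of "1/2"] by (simp add: powr_half_sqrt)
  thus ?thesis
    unfolding c_ell_def by (simp add: prod.distrib)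
qed

lemma sum_c_ell_mult_sqrt_eq_prod:
  fixes l :: nat
  assumes "l > 0"
  shows "(\<Sum>d | d dvd l. c_ell l d * sqrt (real d)) =
         (\<Prod>p\<in>prime_factors l. \<Sum>j\<le>multiplicity p l. cheb_coeff j (multiplicity p l) * sqrt (real p) ^ j)"
proof -
  have "(\<Sum>d | d dvd l. c_ell l d * sqrt (real d)) = (\<Sum>d | d dvd l.
          \<Prod>p\<in>prime_factors l. cheb_coeff (multiplicity p d) (multiplicity p l) * sqrt (real p) ^ multiplicity p d)"
    using assms by (intro sum.cong) (auto simp: c_ell_mult_sqrt_eq_prod)
  also have "\<dots> = (\<Prod>p\<in>prime_factors l. \<Sum>j\<le>multiplicity p l. cheb_coeff j (multiplicity p l) * sqrt (real p) ^ j)"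
    by (rule sum_divisors_prod_eq_prod_sum[OF assms])
  finally show ?thesis .
qed

lemma sum_cheb_coeff_sqrt_square_le:
  fixes p :: real
  assumes "p > 0"
  shows "(\<Sum>j\<le>n. cheb_coeff j n * sqrt p ^ j)\<^sup>2 \<le> ((p + 1)\<^sup>2 / p) ^ n"
proof -
  have y: "sqrt p > 0"
    using assms by simp
  have "(\<Sum>j\<le>n. cheb_coeff j n * sqrt p ^ j)\<^sup>2 \<le> ((sqrt p + 1 / sqrt p) ^ n)\<^sup>2"
    using sum_cheb_coeff_power_le[OF y, of n] by (intro power_mono) auto
  also have "\<dots> = ((sqrt p + 1 / sqrt p)\<^sup>2) ^ n"
    by (simp only: power_mult[symmetric] mult.commute)
  also have "(sqrt p + 1 / sqrt p)\<^sup>2 = (p + 1)\<^sup>2 / p"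
    using assms by (simp add: field_simps power2_eq_square)
  finally show ?thesis .
qed

lemma S_sum_term_le_1:
  fixes l :: nat
  assumes "l > 0"
  shows "real l / (real (nu l))\<^sup>2 * (\<Sum>d | d dvd l. c_ell l d * sqrt (real d))\<^sup>2 \<le> 1"
proof -
  let ?P = "prime_factors l" and ?m = "\<lambda>p. multiplicity p l"
  have "(\<Sum>d | d dvd l. c_ell l d * sqrt (real d))\<^sup>2 =
        (\<Prod>p\<in>?P. (\<Sum>j\<le>?m p. cheb_coeff j (?m p) * sqrt (real p) ^ j)\<^sup>2)"
    by (simp only: sum_c_ell_mult_sqrt_eq_prod[OF assms] prod_power_distrib)
  also have "\<dots> \<le> (\<Prod>p\<in>?P. ((real p + 1)\<^sup>2 / real p) ^ ?m p)"
    by (intro prod_mono conjI zero_le_power2 sum_cheb_coeff_sqrt_square_le)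
      (simp add: prime_gt_0_nat in_prime_factors_imp_prime)
  also have "\<dots> = (\<Prod>p\<in>?P. ((real p + 1) ^ ?m p)\<^sup>2 / real p ^ ?m p)"
    by (simp only: power_divide power_mult[symmetric] mult.commute)
  also have "\<dots> = (\<Prod>p\<in>?P. ((real p + 1) ^ ?m p)\<^sup>2) / (\<Prod>p\<in>?P. real p ^ ?m p)"
    by (rule prod_dividef)
  also have "\<dots> = (real (nu l))\<^sup>2 / real l"
  proof -
    have "real l = real (\<Prod>p\<in>?P. p ^ ?m p)"
      using prod_prime_factors[of l] assms by simp
    thus ?thesis
      by (simp add: nu_def prod_power_distrib add.commute)
  qed
  finally have "(\<Sum>d | d dvd l. c_ell l d * sqrt (real d))\<^sup>2 \<le> (real (nu l))\<^sup>2 / real l" .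
  moreover have "nu l > 0"
    by (simp add: nu_def)
  ultimately show ?thesis
    using assms by (simp add: field_simps)
qed

section \<open>Rankin's bound for the number of terms\<close>

lemma sum_atMost_power_le:
  fixes x :: real
  assumes "0 \<le> x" "x < 1"
  shows "(\<Sum>j\<le>K. x ^ j) \<le> 1 / (1 - x)"
proof -
  have "(\<Sum>j\<le>K. x ^ j) = (\<Sum>j<Suc K. x ^ j)"
    by (simp add: lessThan_Suc_atMost)
  also have "\<dots> \<le> (\<Sum>j. x ^ j)"
    using assms by (intro sum_le_suminf summable_geometric) auto
  also have "\<dots> = 1 / (1 - x)"
    using suminf_geometric[of x] assms by simp
  finally show ?thesis .
qed

lemma sum_divisors_powr_le:
  fixes L :: nat and \<epsilon> :: real
  assumes "L > 0" "\<epsilon> > 0"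
  shows "(\<Sum>d | d dvd L. real d powr (-\<epsilon>)) \<le> (\<Prod>p\<in>prime_factors L. 1 / (1 - real p powr (-\<epsilon>)))"
proof -
  have "(\<Sum>d | d dvd L. real d powr (-\<epsilon>)) =
        (\<Sum>d | d dvd L. \<Prod>p\<in>prime_factors L. (real p powr (-\<epsilon>)) ^ multiplicity p d)"
    by (intro sum.cong refl powr_eq_prod_prime_factors_dvd[OF assms(1)]) simp
  also have "\<dots> = (\<Prod>p\<in>prime_factors L. \<Sum>j\<le>multiplicity p L. (real p powr (-\<epsilon>)) ^ j)"
    by (rule sum_divisors_prod_eq_prod_sum[OF assms(1), where g = "\<lambda>p j. (real p powr (-\<epsilon>)) ^ j"])
  also have "\<dots> \<le> (\<Prod>p\<in>prime_factors L. 1 / (1 - real p powr (-\<epsilon>)))"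
  proof (rule prod_mono)
    fix p assume "p \<in> prime_factors L"
    hence "real p > 1"
      using prime_gt_1_nat[OF in_prime_factors_imp_prime] by simp
    hence "real p powr (-\<epsilon>) < 1"
      using assms(2) by (intro powr_less_one) auto
    thus "0 \<le> (\<Sum>j\<le>multiplicity p L. (real p powr (-\<epsilon>)) ^ j) \<and>
          (\<Sum>j\<le>multiplicity p L. (real p powr (-\<epsilon>)) ^ j) \<le> 1 / (1 - real p powr (-\<epsilon>))"
      by (simp add: sum_nonneg sum_atMost_power_le)
  qed
  finally show ?thesis .
qed

lemma multiplicity_le_self:
  fixes n p :: nat
  assumes "n > 0" "prime p"
  shows "multiplicity p n \<le> n"
proof -
  have "multiplicity p n < 2 ^ multiplicity p n"
    by (rule less_exp)
  also have "\<dots> \<le> p ^ multiplicity p n"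
    using prime_ge_2_nat[OF assms(2)] by (intro power_mono) auto
  also have "\<dots> \<le> n"
    using multiplicity_dvd[of p n] assms by (intro dvd_imp_le) auto
  finally show ?thesis
    by simp
qed

lemma smooth_dvd_power:
  fixes l L K :: nat
  assumes "0 < l" "l \<le> K" "prime_factors l \<subseteq> prime_factors L" "L > 0"
  shows "l dvd L ^ K"
proof (rule multiplicity_le_imp_dvd)
  fix p :: nat assume p: "prime p"
  show "multiplicity p l \<le> multiplicity p (L ^ K)"
  proof (cases "p \<in> prime_factors l")
    case True
    with assms(3) have "multiplicity p L \<ge> 1"
      by (auto simp: prime_factors_multiplicity)
    moreover have "multiplicity p (L ^ K) = K * multiplicity p L"
      using p assms(4) by (intro prime_elem_multiplicity_power_distrib) auto
    moreover have "multiplicity p l \<le> K"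
      using multiplicity_le_self[OF assms(1) p] assms(2) by linarith
    ultimately show ?thesis
      by (metis le_trans mult.right_neutral mult_le_mono2)
  next
    case False
    with p assms(1) have "multiplicity p l = 0"
      by (simp add: prime_factors_multiplicity)
    thus ?thesis
      by simp
  qed
qed (use assms in simp)

lemma card_smooth_le:
  fixes L :: nat and Y \<epsilon> :: real
  assumes L: "L > 0" and Y: "Y \<ge> 1" and \<epsilon>: "\<epsilon> > 0"
  shows "real (card {l. 0 < l \<and> real l \<le> Y \<and> prime_factors l \<subseteq> prime_factors L})
     \<le> Y powr \<epsilon> * (\<Prod>p\<in>prime_factors L. 1 / (1 - real p powr (-\<epsilon>)))"
proof -
  define T where "T = {l. 0 < l \<and> real l \<le> Y \<and> prime_factors l \<subseteq> prime_factors L}"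
  define K where "K = nat \<lfloor>Y\<rfloor>"
  have "K > 0"
    using Y by (simp add: K_def)
  have T_sub: "T \<subseteq> {d. d dvd L ^ K}"
    using L by (auto simp: T_def K_def le_nat_floor intro!: smooth_dvd_power)
  have "real (card T) \<le> (\<Sum>l\<in>T. Y powr \<epsilon> * real l powr (-\<epsilon>))"
  proof -
    have "1 \<le> Y powr \<epsilon> * real l powr (-\<epsilon>)" if "l \<in> T" for l
    proof -
      have "real l powr \<epsilon> \<le> Y powr \<epsilon>" "real l powr \<epsilon> > 0"
        using that \<epsilon> by (auto simp: T_def intro: powr_mono2)
      thus ?thesis
        by (simp add: powr_minus field_simps)
    qed
    hence "(\<Sum>l\<in>T. 1) \<le> (\<Sum>l\<in>T. Y powr \<epsilon> * real l powr (-\<epsilon>))"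
      by (rule sum_mono)
    thus ?thesis
      by simp
  qed
  also have "\<dots> = Y powr \<epsilon> * (\<Sum>l\<in>T. real l powr (-\<epsilon>))"
    by (simp add: sum_distrib_left)
  also have "\<dots> \<le> Y powr \<epsilon> * (\<Sum>d | d dvd L ^ K. real d powr (-\<epsilon>))"
    using T_sub L by (intro mult_left_mono sum_mono2) auto
  also have "\<dots> \<le> Y powr \<epsilon> * (\<Prod>p\<in>prime_factors L. 1 / (1 - real p powr (-\<epsilon>)))"
    using sum_divisors_powr_le[of "L ^ K" \<epsilon>] L \<epsilon> \<open>K > 0\<close>
    by (intro mult_left_mono) (auto simp: prime_factors_power)
  finally show ?thesis
    unfolding T_def .
qed

lemma prod_euler_factor_le:
  fixes \<epsilon> :: real and P :: "nat set"
  assumes \<epsilon>: "\<epsilon> > 0" and P: "finite P" "\<And>p. p \<in> P \<Longrightarrow> prime p"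
  defines "B \<equiv> 1 / (1 - 2 powr (-\<epsilon>))" and "N \<equiv> nat \<lceil>2 powr (1/\<epsilon>)\<rceil>"
  shows "(\<Prod>p\<in>P. 1 / (1 - real p powr (-\<epsilon>))) \<le> B ^ N * 2 ^ card P"
proof -
  have B: "B \<ge> 1"
    using \<epsilon> powr_less_one[of 2 "-\<epsilon>"] by (simp add: B_def field_simps)
  have factor: "0 \<le> 1 / (1 - real p powr (-\<epsilon>)) \<and> 1 / (1 - real p powr (-\<epsilon>)) \<le> 2 * (if p < N then B else 1)"
    if "p \<in> P" for p
  proof -
    have p: "real p \<ge> 2"
      using prime_ge_2_nat[OF P(2)[OF that]] by simp
    have le: "real p powr (-\<epsilon>) \<le> 2 powr (-\<epsilon>)" and lt: "2 powr (-\<epsilon>) < 1"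
      using p \<epsilon> by (auto intro: powr_mono2' powr_less_one)
    show ?thesis
    proof (cases "p < N")
      case True
      have "1 / (1 - real p powr (-\<epsilon>)) \<le> B"
        unfolding B_def using le lt by (intro divide_left_mono mult_pos_pos) auto
      with True B le lt show ?thesis
        by simp
    next
      case False
      hence "real p \<ge> 2 powr (1/\<epsilon>)"
        unfolding N_def by linarith
      hence "real p powr (-\<epsilon>) \<le> (2 powr (1/\<epsilon>)) powr (-\<epsilon>)"
        using \<epsilon> by (intro powr_mono2') auto
      also have "\<dots> = 1/2"
        using \<epsilon> by (simp add: powr_powr powr_minus_divide)
      finally have "real p powr (-\<epsilon>) \<le> 1/2" .
      with False show ?thesis
        by (simp add: field_simps)
    qed
  qed
  have "(\<Prod>p\<in>P. 1 / (1 - real p powr (-\<epsilon>))) \<le> (\<Prod>p\<in>P. 2 * (if p < N then B else 1))"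
    by (intro prod_mono factor)
  also have "\<dots> = 2 ^ card P * B ^ card (P \<inter> {..<N})"
    using P(1) by (simp add: prod.distrib prod.If_cases lessThan_def)
  also have "\<dots> \<le> 2 ^ card P * B ^ N"
    using B card_mono[of "{..<N}" "P \<inter> {..<N}"] by (intro mult_left_mono power_increasing) auto
  finally show ?thesis
    by (simp only: mult.commute)
qed

theorem lemma6p2:
  shows "\<forall>\<epsilon>::real. \<epsilon> > 0 \<longrightarrow> (\<exists>C::real. \<forall>L::nat. \<forall>Y::real. L > 0 \<longrightarrow> Y \<ge> 1 \<longrightarrow>
           S_sum L Y \<le> C * Y powr \<epsilon> * real (card {d. d dvd L}))"
proof (intro allI impI)
  fix \<epsilon> :: real assume \<epsilon>: "\<epsilon> > 0"
  define C where "C = (1 / (1 - 2 powr (-\<epsilon>))) ^ nat \<lceil>2 powr (1/\<epsilon>)\<rceil>"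
  have "C \<ge> 0"
    using powr_less_one[of 2 "-\<epsilon>"] \<epsilon> by (simp add: C_def)
  have "S_sum L Y \<le> C * Y powr \<epsilon> * real (card {d. d dvd L})" if L: "L > 0" and Y: "Y \<ge> 1" for L Y
  proof -
    let ?T = "{l. 0 < l \<and> real l \<le> Y \<and> prime_factors l \<subseteq> prime_factors L}"
    have "S_sum L Y \<le> real (card ?T) * 1"
      unfolding S_sum_def by (rule sum_bounded_above) (use S_sum_term_le_1 in blast)
    also have "\<dots> \<le> Y powr \<epsilon> * (\<Prod>p\<in>prime_factors L. 1 / (1 - real p powr (-\<epsilon>)))"
      using card_smooth_le[OF L Y \<epsilon>] by simp
    also have "\<dots> \<le> Y powr \<epsilon> * (C * 2 ^ card (prime_factors L))"
      unfolding C_def using \<epsilon> by (intro mult_left_mono prod_euler_factor_le) auto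
    also have "\<dots> \<le> Y powr \<epsilon> * (C * real (card {d. d dvd L}))"
    proof -
      have "real (2 ^ card (prime_factors L)) \<le> real (card {d. d dvd L})"
        using two_power_card_prime_factors_le_card_divisors[OF L] by (rule of_nat_mono)
      thus ?thesis
        using \<open>C \<ge> 0\<close> by (intro mult_left_mono) auto
    qed
    finally show ?thesis
      by (simp only: mult_ac)
  qed
  thus "\<exists>C. \<forall>L Y. L > 0 \<longrightarrow> Y \<ge> 1 \<longrightarrow> S_sum L Y \<le> C * Y powr \<epsilon> * real (card {d. d dvd L})"
    by blast
qed

end
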